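(* Let $d,a,b$ be positive integers, $r=(d+2b)/d$, $R=(a+d)/d$, and assume $r\ge2$ and $R\ge3r$. Let $\rho=x_1-r$ with $x_1$ as in the context. Then \[ \rho<\frac{5r}{2e^{R/r}}. \]
   Context: For $t\in\mathbb C\setminus\{\pm1,\pm r\}$ let $\Phi(t)=d\log|t+r|-d\log|t-r|+(a+d)(\log|t-1|-\log|t+1|)$. Under $R\ge3r$ there is a unique $x_1\in(r,\infty)$ with $\Phi(x_1)=0$. *)

theory Defs
  imports Complex_Main
begin

text \<open>Phi restricted to real arguments t (x_1 lies on the real axis); |.| is the absolute value.\<close>
definition Phi :: "real \<Rightarrow> real \<Rightarrow> real \<Rightarrow> real \<Rightarrow> real" where
  "Phi d a r t = d * ln (abs (t + r)) - d * ln (abs (t - r)) + (a + d) * (ln (abs (t - 1)) - ln (abs (t + 1)))"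

end

theory Submission imports Defs begin

text \<open>Writing \<open>x\<^sub>1 = r + \<rho>\<close>, the equation \<open>\<Phi>(x\<^sub>1) = 0\<close> reads
  \<open>ln (1 + 2r/\<rho>) = R ln ((x\<^sub>1 + 1)/(x\<^sub>1 - 1))\<close>, and the Pade bound
  \<open>ln (1 + u) \<ge> 2u/(2 + u)\<close> makes the right-hand side at least \<open>2R/x\<^sub>1\<close>.
  Comparing with \<open>ln (1 + u) < u\<close> first gives \<open>(R/r - 1) \<rho> < r\<close>, hence
  \<open>2R/x\<^sub>1 > 2(R/r - 1)\<close>; exponentiating then shows that \<open>2r/\<rho>\<close> exceeds
  \<open>e\<^bsup>2R/r - 2\<^esup> - 1 > 4/5 e\<^bsup>R/r\<^esup>\<close>.\<close>

lemma pade_le_ln_add_one: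
  fixes u :: real
  assumes "0 \<le> u"
  shows "2 * u / (2 + u) \<le> ln (1 + u)"
proof -
  let ?h = "\<lambda>v::real. ln (1 + v) - 2 * v / (2 + v)"
  have "?h 0 \<le> ?h u"
  proof (rule DERIV_nonneg_imp_nondecreasing[OF assms])
    fix v :: real
    assume v: "0 \<le> v" "v \<le> u"
    have "(?h has_real_derivative 1 / (1 + v) - (2 * (2 + v) - 2 * v) / (2 + v)^2) (at v)"
      using v by (auto intro!: derivative_eq_intros simp: power2_eq_square)
    moreover have "1 / (1 + v) - (2 * (2 + v) - 2 * v) / (2 + v)^2 = v^2 / ((1 + v) * (2 + v)^2)"
      using v by (simp add: divide_simps power2_eq_square) (simp add: algebra_simps)
    moreover have "0 \<le> v^2 / ((1 + v) * (2 + v)^2)"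
      using v by simp
    ultimately show "\<exists>y. (?h has_real_derivative y) (at v) \<and> 0 \<le> y"
      by metis
  qed
  then show ?thesis by simp
qed

lemma ratio_eq_one_plus:
  fixes x c :: real
  assumes "c < x"
  shows "(x + c) / (x - c) = 1 + 2 * c / (x - c)"
  using assms by (simp add: field_simps)

lemma ln_ratio_ge:
  fixes x c :: real
  assumes "0 < c" "c < x"
  shows "2 * c / x \<le> ln ((x + c) / (x - c))"
proof -
  have "2 * c / x = 2 * (2 * c / (x - c)) / (2 + 2 * c / (x - c))"
    using assms by (simp add: field_simps)
  also have "\<dots> \<le> ln (1 + 2 * c / (x - c))"
    using assms by (intro pade_le_ln_add_one) simp
  finally show ?thesis
    using assms by (simp add: ratio_eq_one_plus)
qed

lemma ln_ratio_lt:
  fixes x c :: real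
  assumes "0 < c" "c < x"
  shows "ln ((x + c) / (x - c)) < 2 * c / (x - c)"
  using assms ln_add_one_self_less_self[of "2 * c / (x - c)"] by (simp add: ratio_eq_one_plus)

lemma Phi_eq_zero_iff:
  fixes d a r x :: real
  assumes "0 < d" "1 \<le> r" "r < x"
  shows "Phi d a r x = 0 \<longleftrightarrow> ln ((x + r) / (x - r)) = (a + d) / d * ln ((x + 1) / (x - 1))"
proof -
  have "Phi d a r x = d * ln ((x + r) / (x - r)) - (a + d) * ln ((x + 1) / (x - 1))"
    using assms by (simp add: Phi_def ln_div algebra_simps)
  then show ?thesis
    using assms by (auto simp: field_simps)
qed

lemma exp_double_pred_gt:
  fixes s :: real
  assumes "3 \<le> s"
  shows "4 / 5 * exp s < exp (2 * s - 2) - 1"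
proof -
  have "2 \<le> exp (s - 2)"
    using exp_ge_add_one_self[of "s - 2"] assms by simp
  then have "2 * exp s \<le> exp (s - 2) * exp s"
    by simp
  also have "\<dots> = exp (2 * s - 2)"
    by (simp flip: exp_add)
  finally have "2 * exp s \<le> exp (2 * s - 2)" .
  moreover have "1 \<le> exp s"
    using assms by simp
  ultimately show ?thesis
    by linarith
qed

lemma gap_mul_pred_lt:
  fixes r s x :: real
  assumes "0 < r" "r < x" "2 * s * r / x \<le> ln ((x + r) / (x - r))"
  shows "(s - 1) * (x - r) < r"
proof -
  have "2 * s * r / x < 2 * r / (x - r)"
    using assms ln_ratio_lt by fastforce
  then have "r * (s * (x - r)) < r * x"
    using assms by (simp add: field_simps)
  then have "s * (x - r) < x"
    using assms by simp
  then show ?thesis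
    by (simp add: algebra_simps)
qed

lemma gap_lt_of_ln_ratio_ge:
  fixes r s x :: real
  assumes "0 < r" "3 \<le> s" "r < x" and ln_ge: "2 * s * r / x \<le> ln ((x + r) / (x - r))"
  shows "x - r < 5 * r / (2 * exp s)"
proof -
  have "(s - 1) * (x - r) < r"
    using assms gap_mul_pred_lt by blast
  then have "2 * s - 2 < 2 * s * r / x"
    using assms by (simp add: field_simps)
  also note ln_ge
  finally have "exp (2 * s - 2) < exp (ln ((x + r) / (x - r)))"
    by simp
  then have "exp (2 * s - 2) < (x + r) / (x - r)"
    using assms by simp
  then have "exp (2 * s - 2) - 1 < 2 * r / (x - r)"
    using assms by (simp add: ratio_eq_one_plus)
  with exp_double_pred_gt[OF assms(2)] have "4 / 5 * exp s < 2 * r / (x - r)"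
    by linarith
  then show ?thesis
    using assms by (simp add: field_simps)
qed

theorem lemma4p14:
  fixes d a b :: nat and r R x1 :: real
  assumes "d > 0" "a > 0" "b > 0"
    and "r = (real d + 2 * real b) / real d"
    and "R = (real a + real d) / real d"
    and "r \<ge> 2" and "R \<ge> 3 * r"
    and "x1 > r" and "Phi (real d) (real a) r x1 = 0"
  shows "x1 - r < 5 * r / (2 * exp (R / r))"
proof (rule gap_lt_of_ln_ratio_ge)
  show "0 < r" "r < x1"
    using assms(6,8) by auto
  show "3 \<le> R / r"
    using assms(6,7) by (simp add: le_divide_eq)
  have "2 * (R / r) * r / x1 = R * (2 * 1 / x1)"
    using assms(6) by simp
  also have "\<dots> \<le> R * ln ((x1 + 1) / (x1 - 1))"
    using assms(6-8) ln_ratio_ge[of 1 x1] by (intro mult_left_mono) auto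
  also have "\<dots> = ln ((x1 + r) / (x1 - r))"
    using assms(1,5,6,8,9) Phi_eq_zero_iff[of "real d" r x1 "real a"] by simp
  finally show "2 * (R / r) * r / x1 \<le> ln ((x1 + r) / (x1 - r))" .
qed

end
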